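(* Assume the current syndrome $\sigma$ is non-empty. (i) If $\sigma \subseteq \{v_1\}\times C_2$ for some fixed $v_1\in V_1$ (a horizontal line), then every set $F\in\mathcal F$ with $\mathrm{score}(F)=\max_{F'\in\mathcal F}\mathrm{score}(F')>0$ satisfies $F\subseteq \{v_1\}\times V_2$. (ii) Symmetrically, if $\sigma\subseteq V_1\times\{c_2\}$ for some fixed $c_2\in C_2$ (a vertical line), then every set $F\in\mathcal F$ with $\mathrm{score}(F)=\max_{F'\in\mathcal F}\mathrm{score}(F')>0$ satisfies $F\subseteq C_1\times\{c_2\}$. In other words, the only sets that Small-Set-Flip can flip in this situation lie on the line $\{v_1\}\times V_2$ (resp. $C_1\times\{c_2\}$).
   Context: Let $G=(V\cup C,E)$ be a connected bipartite graph that is $(\Delta_V,\Delta_C)$-biregular (every vertex of $V$ has degree $\Delta_V$, every vertex of $C$ has degree $\Delta_C$), with $\Delta_V,\Delta_C\ge 2$. For a vertex $x$, $\Gamma(x)$ denotes its set of neighbours in $G$. Let $G_1=(V_1\cup C_1,E_1)$ and $G_2=(V_2\cup C_2,E_2)$ be two copies of $G$. The hypergraph product code has qubit set $Q=V_1\times V_2\ \sqcup\ C_1\times C_2$. Its $X$-type checks are indexed by $V_1\times C_2$, the check $(v,c)$ acting on the qubits $\{v\}\times\Gamma(c)\ \sqcup\ \Gamma(v)\times\{c\}$. Its $Z$-type generators are indexed by $C_1\times V_2$, the generator $(c,v)$ having support $\mathrm{supp}(c,v)=\Gamma(c)\times\{v\}\ \sqcup\ \{c\}\times\Gamma(v)$.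 For a set $F\subseteq Q$ (support of a $Z$ error), its syndrome $\sigma(F)\subseteq V_1\times C_2$ is the set of $X$-checks acting on an odd number of qubits of $F$. The current syndrome $\sigma\subseteq V_1\times C_2$ is the set of unsatisfied checks. Let $\mathcal F=\{F: F\subseteq \mathrm{supp}(c,v)\text{ for some }(c,v)\in C_1\times V_2\}$. For $F\neq\emptyset$, $\mathrm{score}(F)=\big(|\sigma|-|\sigma\,\triangle\,\sigma(F)|\big)/|F|$ (here $\triangle$ is symmetric difference, i.e. sum mod 2), and $\mathrm{score}(\emptyset)=0$. The Small-Set-Flip decoder, in each iteration, selects a set $F\in\mathcal F$ maximizing $\mathrm{score}$ and, if that score is positive, flips it (replacing $\sigma$ by $\sigma\triangle\sigma(F)$); otherwise it stops. *)

theory Defs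
  imports Complex_Main
begin

text \<open>A bipartite graph G = (V \<union> C, E) is given by vertex sets V, C and an edge
  set E \<subseteq> V \<times> C. Both copies G1, G2 of G are G itself.\<close>

definition nbrV :: "('v \<times> 'c) set \<Rightarrow> 'v \<Rightarrow> 'c set" where
  "nbrV E v = {c. (v, c) \<in> E}"

definition nbrC :: "('v \<times> 'c) set \<Rightarrow> 'c \<Rightarrow> 'v set" where
  "nbrC E c = {v. (v, c) \<in> E}"

definition graph_rel :: "('v \<times> 'c) set \<Rightarrow> (('v + 'c) \<times> ('v + 'c)) set" where
  "graph_rel E = {(Inl v, Inr c) | v c. (v, c) \<in> E} \<union> {(Inr c, Inl v) | v c. (v, c) \<in> E}"

definition connected_bip :: "'v set \<Rightarrow> 'c set \<Rightarrow> ('v \<times> 'c) set \<Rightarrow> bool" where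
  "connected_bip V C E \<longleftrightarrow> (V \<noteq> {} \<or> C \<noteq> {}) \<and>
     (\<forall>x \<in> Inl ` V \<union> Inr ` C. \<forall>y \<in> Inl ` V \<union> Inr ` C. (x, y) \<in> (graph_rel E)\<^sup>*)"

definition biregular_bip :: "'v set \<Rightarrow> 'c set \<Rightarrow> ('v \<times> 'c) set \<Rightarrow> nat \<Rightarrow> nat \<Rightarrow> bool" where
  "biregular_bip V C E dV dC \<longleftrightarrow> finite V \<and> finite C \<and> E \<subseteq> V \<times> C \<and>
     (\<forall>v \<in> V. card (nbrV E v) = dV) \<and> (\<forall>c \<in> C. card (nbrC E c) = dC)"

definition qubits :: "'v set \<Rightarrow> 'c set \<Rightarrow> (('v \<times> 'v) + ('c \<times> 'c)) set" where
  "qubits V C = Inl ` (V \<times> V) \<union> Inr ` (C \<times> C)"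

definition xcheck :: "('v \<times> 'c) set \<Rightarrow> 'v \<Rightarrow> 'c \<Rightarrow> (('v \<times> 'v) + ('c \<times> 'c)) set" where
  "xcheck E v c = Inl ` ({v} \<times> nbrC E c) \<union> Inr ` (nbrV E v \<times> {c})"

definition zsupp :: "('v \<times> 'c) set \<Rightarrow> 'c \<Rightarrow> 'v \<Rightarrow> (('v \<times> 'v) + ('c \<times> 'c)) set" where
  "zsupp E c v = Inl ` (nbrC E c \<times> {v}) \<union> Inr ` ({c} \<times> nbrV E v)"

definition syndrome :: "'v set \<Rightarrow> 'c set \<Rightarrow> ('v \<times> 'c) set \<Rightarrow> (('v \<times> 'v) + ('c \<times> 'c)) set \<Rightarrow> ('v \<times> 'c) set" where
  "syndrome V C E F = {(v, c) \<in> V \<times> C. odd (card (F \<inter> xcheck E v c))}"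

definition symdiff :: "'a set \<Rightarrow> 'a set \<Rightarrow> 'a set" where
  "symdiff A B = (A - B) \<union> (B - A)"

definition small_sets :: "'v set \<Rightarrow> 'c set \<Rightarrow> ('v \<times> 'c) set \<Rightarrow> (('v \<times> 'v) + ('c \<times> 'c)) set set" where
  "small_sets V C E = {F. \<exists>c \<in> C. \<exists>v \<in> V. F \<subseteq> zsupp E c v}"

definition score :: "'v set \<Rightarrow> 'c set \<Rightarrow> ('v \<times> 'c) set \<Rightarrow> ('v \<times> 'c) set \<Rightarrow> (('v \<times> 'v) + ('c \<times> 'c)) set \<Rightarrow> real" where
  "score V C E \<sigma> F = (if F = {} then 0 else
     (real (card \<sigma>) - real (card (symdiff \<sigma> (syndrome V C E F)))) / real (card F))"

end

theory Submission
  imports Defs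
begin

text \<open>A set \<open>F \<in> \<F>\<close> in the support of the generator \<open>(c, v)\<close> is \<open>A \<times> {v} \<squnion> {c} \<times> B\<close>
  with \<open>A \<subseteq> \<Gamma>(c)\<close>, \<open>B \<subseteq> \<Gamma>(v)\<close>; its syndrome is \<open>(A \<times> \<Gamma>(v)) \<triangle> (\<Gamma>(c) \<times> B)\<close>, whose row
  \<open>u \<in> \<Gamma>(c)\<close> is \<open>\<Gamma>(v) - B\<close> if \<open>u \<in> A\<close> and \<open>B\<close> otherwise. When \<open>\<sigma>\<close> lies on the row \<open>v\<^sub>1\<close>,
  flipping \<open>F\<close> can gain only on row \<open>v\<^sub>1\<close> and loses on every other row. A positive gain
  therefore forces row \<open>v\<^sub>1\<close> to be the only row of its type; then every other row is the
  complement of row \<open>v\<^sub>1\<close> in \<open>\<Gamma>(v)\<close> and loses at least what the single qubit \<open>(v\<^sub>1, v)\<close>,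
  whose syndrome is the full row \<open>{v\<^sub>1} \<times> \<Gamma>(v)\<close>, gains beyond \<open>F\<close>. As such an \<open>F\<close> has at
  least two qubits, that single qubit has a strictly larger score. The column case is the
  transpose.\<close>

definition gain :: "'a set \<Rightarrow> 'a set \<Rightarrow> int" where
  "gain \<sigma> S = int (card (\<sigma> \<inter> S)) - int (card (S - \<sigma>))"

lemma card_minus_card_symdiff:
  assumes "finite \<sigma>" "finite S"
  shows "real (card \<sigma>) - real (card (symdiff \<sigma> S)) = of_int (gain \<sigma> S)"
proof -
  have "card (symdiff \<sigma> S) = card (\<sigma> - S) + card (S - \<sigma>)"
    using assms unfolding symdiff_def by (intro card_Un_disjoint) auto
  moreover have "card \<sigma> = card (\<sigma> - S) + card (\<sigma> \<inter> S)"
    using assms by (metis Diff_Diff_Int Int_Diff_disjoint Int_commute card_Un_disjoint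
        finite_Diff finite_Int Un_Diff_Int)
  ultimately show ?thesis unfolding gain_def by simp
qed

lemma gain_le_card: "finite S \<Longrightarrow> gain \<sigma> S \<le> int (card S)"
  unfolding gain_def using card_mono[of S "\<sigma> \<inter> S"] by auto

lemma gain_le_gain_superset:
  assumes "finite T" "R \<subseteq> T"
  shows "gain \<sigma> R \<le> gain \<sigma> T + int (card (T - R))"
proof -
  have "card (\<sigma> \<inter> R) \<le> card (\<sigma> \<inter> T)"
    using assms by (intro card_mono) auto
  moreover have "card (T - \<sigma>) \<le> card ((R - \<sigma>) \<union> (T - R))"
    using assms by (intro card_mono) (auto intro: finite_subset)
  moreover have "card ((R - \<sigma>) \<union> (T - R)) \<le> card (R - \<sigma>) + card (T - R)"
    by (rule card_Un_le)
  ultimately show ?thesis unfolding gain_def by linarith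
qed

lemma gain_split:
  assumes "finite S" "\<sigma> \<subseteq> L"
  shows "gain \<sigma> S = gain \<sigma> (S \<inter> L) - int (card (S - L))"
proof -
  have "\<sigma> \<inter> S = \<sigma> \<inter> (S \<inter> L)" "S - \<sigma> = (S \<inter> L - \<sigma>) \<union> (S - L)"
    using assms(2) by auto
  moreover have "card ((S \<inter> L - \<sigma>) \<union> (S - L)) = card (S \<inter> L - \<sigma>) + card (S - L)"
    using assms(1) by (intro card_Un_disjoint) auto
  ultimately show ?thesis unfolding gain_def by simp
qed

lemma gain_swap: "gain (prod.swap ` \<sigma>) (prod.swap ` S) = gain \<sigma> S"
proof -
  have inj: "inj prod.swap" by (simp add: inj_on_def)
  then have "prod.swap ` \<sigma> \<inter> prod.swap ` S = prod.swap ` (\<sigma> \<inter> S)"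
    "prod.swap ` S - prod.swap ` \<sigma> = prod.swap ` (S - \<sigma>)"
    by (simp_all add: image_Int image_set_diff)
  then show ?thesis
    unfolding gain_def using inj by (simp add: card_image inj_on_subset)
qed

definition symdiff_row :: "'x set \<Rightarrow> 'y set \<Rightarrow> 'x set \<Rightarrow> 'y set \<Rightarrow> 'x \<Rightarrow> 'y set" where
  "symdiff_row A P Q B u = (if u \<in> A then P - B else if u \<in> Q then B else {})"

lemma symdiff_times_Int_row:
  assumes "A \<subseteq> Q" "B \<subseteq> P"
  shows "symdiff (A \<times> P) (Q \<times> B) \<inter> ({u} \<times> UNIV) = {u} \<times> symdiff_row A P Q B u"
  using assms unfolding symdiff_def symdiff_row_def by auto

lemma gain_on_row_le_minus_other_row:
  assumes fin: "finite P" "finite Q" and AB: "A \<subseteq> Q" "B \<subseteq> P"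
    and \<sigma>: "\<sigma> \<subseteq> {x} \<times> UNIV" and "u \<noteq> x"
  shows "gain \<sigma> (symdiff (A \<times> P) (Q \<times> B))
           \<le> gain \<sigma> ({x} \<times> symdiff_row A P Q B x) - int (card (symdiff_row A P Q B u))"
proof -
  define S where "S = symdiff (A \<times> P) (Q \<times> B)"
  have "S \<subseteq> Q \<times> P"
    using AB unfolding S_def symdiff_def by auto
  then have "finite S"
    using fin finite_subset by blast
  have "{u} \<times> symdiff_row A P Q B u \<subseteq> S - {x} \<times> UNIV"
    using symdiff_times_Int_row[OF AB, of u] \<open>u \<noteq> x\<close> unfolding S_def by auto
  then have "card (symdiff_row A P Q B u) \<le> card (S - {x} \<times> UNIV)"
    using \<open>finite S\<close> card_mono[of "S - {x} \<times> UNIV" "{u} \<times> symdiff_row A P Q B u"]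
    by (simp add: card_cartesian_product_singleton)
  then show ?thesis
    using gain_split[OF \<open>finite S\<close> \<sigma>] symdiff_times_Int_row[OF AB, of x] unfolding S_def by simp
qed

lemma gain_on_row_pos_imp_rows_alternate:
  assumes fin: "finite P" "finite Q" and AB: "A \<subseteq> Q" "B \<subseteq> P"
    and Q2: "2 \<le> card Q" and \<sigma>: "\<sigma> \<subseteq> {x} \<times> UNIV"
    and pos: "0 < gain \<sigma> (symdiff (A \<times> P) (Q \<times> B))"
  shows "x \<in> Q" "symdiff_row A P Q B x \<noteq> {}" "\<And>w. w \<in> Q \<Longrightarrow> w \<noteq> x \<Longrightarrow> w \<in> A \<longleftrightarrow> x \<notin> A"
proof -
  define r where "r = symdiff_row A P Q B"
  have r_le: "gain \<sigma> (symdiff (A \<times> P) (Q \<times> B)) \<le> gain \<sigma> ({x} \<times> r x) - int (card (r w))"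
    if "w \<noteq> x" for w
    using gain_on_row_le_minus_other_row[OF fin AB \<sigma> that] unfolding r_def .
  have "finite (r x)"
    using fin AB finite_subset unfolding r_def symdiff_row_def by auto
  have "\<not> Q \<subseteq> {x}"
    using Q2 card_mono[of "{x}" Q] by auto
  then obtain u where "u \<noteq> x"
    by blast
  show "r x \<noteq> {}"
    using r_le[OF \<open>u \<noteq> x\<close>] pos gain_le_card[of "{x} \<times> r x" \<sigma>] by auto
  then show xQ: "x \<in> Q"
    using AB unfolding r_def symdiff_row_def by (auto split: if_splits)
  show "w \<in> A \<longleftrightarrow> x \<notin> A" if "w \<in> Q" "w \<noteq> x" for w
  proof (rule ccontr)
    assume "\<not> (w \<in> A \<longleftrightarrow> x \<notin> A)"
    then have "r w = r x"
      using that xQ unfolding r_def symdiff_row_def by auto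
    then show False
      using r_le[OF that(2)] pos gain_le_card[of "{x} \<times> r x" \<sigma>] \<open>finite (r x)\<close>
      by (simp add: card_cartesian_product_singleton)
  qed
qed

lemma gain_on_row_le_line:
  assumes fin: "finite P" "finite Q" and AB: "A \<subseteq> Q" "B \<subseteq> P"
    and Q2: "2 \<le> card Q" and \<sigma>: "\<sigma> \<subseteq> {x} \<times> UNIV"
    and pos: "0 < gain \<sigma> (symdiff (A \<times> P) (Q \<times> B))" and off_line: "\<not> (A \<subseteq> {x} \<and> B = {})"
  shows "x \<in> Q \<and> gain \<sigma> (symdiff (A \<times> P) (Q \<times> B)) \<le> gain \<sigma> ({x} \<times> P)
           \<and> 2 \<le> card A + card B"
proof -
  define r where "r = symdiff_row A P Q B"
  note alternate = gain_on_row_pos_imp_rows_alternate[OF fin AB Q2 \<sigma> pos, folded r_def]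
  have "\<not> Q \<subseteq> {x}"
    using Q2 card_mono[of "{x}" Q] by auto
  then obtain u where u: "u \<in> Q" "u \<noteq> x"
    by blast
  have "{x} \<times> P - {x} \<times> r x = {x} \<times> r u" "{x} \<times> r x \<subseteq> {x} \<times> P"
    using alternate(1) alternate(3)[OF u] u AB unfolding r_def symdiff_row_def by auto
  then have "gain \<sigma> ({x} \<times> r x) - int (card (r u)) \<le> gain \<sigma> ({x} \<times> P)"
    using gain_le_gain_superset[of "{x} \<times> P" "{x} \<times> r x" \<sigma>] fin
    by (simp add: card_cartesian_product_singleton)
  with gain_on_row_le_minus_other_row[OF fin AB \<sigma> u(2), folded r_def]
  have le_line: "gain \<sigma> (symdiff (A \<times> P) (Q \<times> B)) \<le> gain \<sigma> ({x} \<times> P)"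
    by linarith
  have "B \<noteq> {}"
  proof (cases "x \<in> A")
    case True
    then have "A \<subseteq> {x}"
      using alternate(3) AB by blast
    then show ?thesis
      using off_line by blast
  next
    case False
    then show ?thesis
      using alternate(1,2) unfolding r_def symdiff_row_def by auto
  qed
  moreover have "A \<noteq> {}"
    using alternate(3)[OF u] by auto
  moreover have "finite A" "finite B"
    using AB fin finite_subset by blast+
  ultimately have "0 < card A" "0 < card B"
    by (simp_all add: card_gt_0_iff)
  with alternate(1) le_line show ?thesis
    by linarith
qed

lemma gain_on_column_le_line:
  assumes "finite P" "finite Q" "A \<subseteq> Q" "B \<subseteq> P" "2 \<le> card P" "\<sigma> \<subseteq> UNIV \<times> {y}"
    and "0 < gain \<sigma> (symdiff (A \<times> P) (Q \<times> B))" and "\<not> (B \<subseteq> {y} \<and> A = {})"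
  shows "y \<in> P \<and> gain \<sigma> (symdiff (A \<times> P) (Q \<times> B)) \<le> gain \<sigma> (Q \<times> {y})
           \<and> 2 \<le> card A + card B"
proof -
  have swap_symdiff: "prod.swap ` symdiff (A \<times> P) (Q \<times> B) = symdiff (B \<times> Q) (P \<times> A)"
    unfolding symdiff_def by force
  have swap_line: "prod.swap ` (Q \<times> {y}) = {y} \<times> Q"
    by force
  have "prod.swap ` \<sigma> \<subseteq> {y} \<times> UNIV"
    using assms(6) by auto
  with assms show ?thesis
    using gain_on_row_le_line[of Q P B A "prod.swap ` \<sigma>" y]
    by (metis add.commute gain_swap swap_line swap_symdiff)
qed

lemma finite_nbrV: "finite C \<Longrightarrow> E \<subseteq> V \<times> C \<Longrightarrow> finite (nbrV E v)"
  unfolding nbrV_def by (auto intro: finite_subset)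

lemma finite_nbrC: "finite V \<Longrightarrow> E \<subseteq> V \<times> C \<Longrightarrow> finite (nbrC E c)"
  unfolding nbrC_def by (auto intro: finite_subset)

lemma small_setsE:
  assumes "F \<in> small_sets V C E"
  obtains c v A B where "c \<in> C" "v \<in> V" "A \<subseteq> nbrC E c" "B \<subseteq> nbrV E v"
    "F = Inl ` (A \<times> {v}) \<union> Inr ` ({c} \<times> B)"
proof -
  obtain c v where cv: "c \<in> C" "v \<in> V" and F: "F \<subseteq> zsupp E c v"
    using assms unfolding small_sets_def by blast
  define A where "A = {u. Inl (u, v) \<in> F}"
  define B where "B = {d. Inr (c, d) \<in> F}"
  have "A \<subseteq> nbrC E c" "B \<subseteq> nbrV E v"
    using F unfolding A_def B_def zsupp_def by auto
  moreover have "F = Inl ` (A \<times> {v}) \<union> Inr ` ({c} \<times> B)"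
  proof
    show "F \<subseteq> Inl ` (A \<times> {v}) \<union> Inr ` ({c} \<times> B)"
      using F unfolding A_def B_def zsupp_def by auto
    show "Inl ` (A \<times> {v}) \<union> Inr ` ({c} \<times> B) \<subseteq> F"
      unfolding A_def B_def by auto
  qed
  ultimately show thesis
    using that cv by blast
qed

lemma small_setsI:
  assumes "c \<in> C" "v \<in> V" "A \<subseteq> nbrC E c" "B \<subseteq> nbrV E v"
  shows "Inl ` (A \<times> {v}) \<union> Inr ` ({c} \<times> B) \<in> small_sets V C E"
proof -
  have "Inl ` (A \<times> {v}) \<union> Inr ` ({c} \<times> B) \<subseteq> zsupp E c v"
    using assms(3,4) unfolding zsupp_def by (intro Un_mono image_mono) auto
  then show ?thesis
    using assms(1,2) unfolding small_sets_def by blast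
qed

lemma finite_small_sets:
  assumes "finite V" "finite C" "E \<subseteq> V \<times> C"
  shows "finite (small_sets V C E)"
proof (rule finite_subset)
  show "small_sets V C E \<subseteq> (\<Union>c\<in>C. \<Union>v\<in>V. Pow (zsupp E c v))"
    unfolding small_sets_def by auto
  show "finite (\<Union>c\<in>C. \<Union>v\<in>V. Pow (zsupp E c v))"
    using assms(1,2) finite_nbrV[OF assms(2,3)] finite_nbrC[OF assms(1,3)]
    unfolding zsupp_def by auto
qed

lemma syndrome_small_set:
  assumes "E \<subseteq> V \<times> C" "A \<subseteq> nbrC E c" "B \<subseteq> nbrV E v"
  shows "syndrome V C E (Inl ` (A \<times> {v}) \<union> Inr ` ({c} \<times> B))
           = symdiff (A \<times> nbrV E v) (nbrC E c \<times> B)"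
proof (rule set_eqI, clarify)
  fix u d
  define hits_Inl where "hits_Inl = (u \<in> A \<and> (v, d) \<in> E)"
  define hits_Inr where "hits_Inr = (d \<in> B \<and> (u, c) \<in> E)"
  have "(Inl ` (A \<times> {v}) \<union> Inr ` ({c} \<times> B)) \<inter> xcheck E u d
          = (if hits_Inl then {Inl (u, v)} else {}) \<union> (if hits_Inr then {Inr (c, d)} else {})"
    unfolding xcheck_def hits_Inl_def hits_Inr_def nbrC_def nbrV_def by auto
  then have "odd (card ((Inl ` (A \<times> {v}) \<union> Inr ` ({c} \<times> B)) \<inter> xcheck E u d))
               \<longleftrightarrow> hits_Inl \<noteq> hits_Inr"
    by auto
  moreover have "((u, d) \<in> V \<times> C \<and> hits_Inl \<noteq> hits_Inr)
                   \<longleftrightarrow> (u \<in> A \<and> d \<in> nbrV E v) \<noteq> (u \<in> nbrC E c \<and> d \<in> B)"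
    using assms unfolding hits_Inl_def hits_Inr_def nbrC_def nbrV_def by blast
  moreover have "(u, d) \<in> symdiff (A \<times> nbrV E v) (nbrC E c \<times> B)
                   \<longleftrightarrow> (u \<in> A \<and> d \<in> nbrV E v) \<noteq> (u \<in> nbrC E c \<and> d \<in> B)"
    unfolding symdiff_def by auto
  ultimately show "(u, d) \<in> syndrome V C E (Inl ` (A \<times> {v}) \<union> Inr ` ({c} \<times> B))
                     \<longleftrightarrow> (u, d) \<in> symdiff (A \<times> nbrV E v) (nbrC E c \<times> B)"
    unfolding syndrome_def by simp
qed

lemma card_small_set:
  assumes "finite A" "finite B"
  shows "card (Inl ` (A \<times> {v}) \<union> Inr ` ({c} \<times> B)) = card A + card B"
  using assms by (subst card_Un_disjoint)
    (auto simp: card_image card_cartesian_product card_cartesian_product_singleton)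

lemma score_small_set:
  assumes "finite V" "finite C" "E \<subseteq> V \<times> C" "finite \<sigma>"
    and "A \<subseteq> nbrC E c" "B \<subseteq> nbrV E v"
  shows "score V C E \<sigma> (Inl ` (A \<times> {v}) \<union> Inr ` ({c} \<times> B))
           = of_int (gain \<sigma> (symdiff (A \<times> nbrV E v) (nbrC E c \<times> B))) / (card A + card B)"
proof -
  have "finite (nbrV E v)" "finite (nbrC E c)"
    using finite_nbrV[OF assms(2,3)] finite_nbrC[OF assms(1,3)] by auto
  then have "finite A" "finite B" "finite (symdiff (A \<times> nbrV E v) (nbrC E c \<times> B))"
    using assms(5,6) unfolding symdiff_def by (auto intro: finite_subset)
  show ?thesis
  proof (cases "A = {} \<and> B = {}")
    case True
    then show ?thesis
      unfolding score_def gain_def by simp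
  next
    case False
    then have "Inl ` (A \<times> {v}) \<union> Inr ` ({c} \<times> B) \<noteq> {}"
      by blast
    then show ?thesis
      unfolding score_def syndrome_small_set[OF assms(3,5,6)]
      using card_minus_card_symdiff[OF assms(4) \<open>finite (symdiff _ _)\<close>]
        card_small_set[where v = v and c = c, OF \<open>finite A\<close> \<open>finite B\<close>] by simp
  qed
qed

lemma score_lt_not_max:
  assumes "finite V" "finite C" "E \<subseteq> V \<times> C"
    and "F' \<in> small_sets V C E" "score V C E \<sigma> F < score V C E \<sigma> F'"
  shows "score V C E \<sigma> F \<noteq> Max (score V C E \<sigma> ` small_sets V C E)"
  using assms finite_small_sets[OF assms(1-3)] Max_ge[of "score V C E \<sigma> ` small_sets V C E"]
  by fastforce

lemma divide_lt_of_two_le: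
  fixes g g' k :: real
  assumes "0 < g / k" "g \<le> g'" "2 \<le> k"
  shows "g / k < g'"
proof -
  have "0 < g"
    using assms by (simp add: zero_less_divide_iff)
  then have "g / k \<le> g / 2"
    using assms(3) by (intro divide_left_mono) auto
  with \<open>0 < g\<close> assms(2) show ?thesis
    by linarith
qed

lemma maximal_flip_on_row:
  assumes fin: "finite V" "finite C" and E: "E \<subseteq> V \<times> C"
    and deg: "\<And>c. c \<in> C \<Longrightarrow> 2 \<le> card (nbrC E c)"
    and \<sigma>: "finite \<sigma>" "\<sigma> \<subseteq> {x} \<times> C" and F: "F \<in> small_sets V C E"
    and max: "score V C E \<sigma> F = Max (score V C E \<sigma> ` small_sets V C E)"
    and pos: "0 < score V C E \<sigma> F"
  shows "F \<subseteq> Inl ` ({x} \<times> V)"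
proof (rule ccontr)
  assume off_line: "\<not> F \<subseteq> Inl ` ({x} \<times> V)"
  obtain c v A B where c: "c \<in> C" and v: "v \<in> V" and AB: "A \<subseteq> nbrC E c" "B \<subseteq> nbrV E v"
    and F_eq: "F = Inl ` (A \<times> {v}) \<union> Inr ` ({c} \<times> B)"
    using F by (rule small_setsE)
  define S where "S = symdiff (A \<times> nbrV E v) (nbrC E c \<times> B)"
  have score: "score V C E \<sigma> F = of_int (gain \<sigma> S) / (card A + card B)"
    unfolding F_eq S_def using score_small_set[OF fin E \<sigma>(1) AB] .
  have "0 < gain \<sigma> S"
    using pos unfolding score by (simp add: zero_less_divide_iff)
  moreover have "\<not> (A \<subseteq> {x} \<and> B = {})"
    using off_line v unfolding F_eq by auto
  moreover have "\<sigma> \<subseteq> {x} \<times> UNIV"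
    using \<sigma>(2) by auto
  ultimately have x: "x \<in> nbrC E c" and le: "gain \<sigma> S \<le> gain \<sigma> ({x} \<times> nbrV E v)"
    and two: "2 \<le> card A + card B"
    using gain_on_row_le_line[OF finite_nbrV[OF fin(2) E] finite_nbrC[OF fin(1) E] AB deg[OF c]]
    unfolding S_def by blast+
  have single: "{x} \<subseteq> nbrC E c" "{} \<subseteq> nbrV E v"
    using x by auto
  have "score V C E \<sigma> F < of_int (gain \<sigma> ({x} \<times> nbrV E v))"
    using pos le two unfolding score by (intro divide_lt_of_two_le) auto
  also have "\<dots> = score V C E \<sigma> (Inl ` ({x} \<times> {v}) \<union> Inr ` ({c} \<times> {}))"
    using score_small_set[OF fin E \<sigma>(1) single] by (simp add: symdiff_def)
  finally show False
    using score_lt_not_max[OF fin E small_setsI[OF c v single]] max by blast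
qed

lemma maximal_flip_on_column:
  assumes fin: "finite V" "finite C" and E: "E \<subseteq> V \<times> C"
    and deg: "\<And>v. v \<in> V \<Longrightarrow> 2 \<le> card (nbrV E v)"
    and \<sigma>: "finite \<sigma>" "\<sigma> \<subseteq> V \<times> {y}" and F: "F \<in> small_sets V C E"
    and max: "score V C E \<sigma> F = Max (score V C E \<sigma> ` small_sets V C E)"
    and pos: "0 < score V C E \<sigma> F"
  shows "F \<subseteq> Inr ` (C \<times> {y})"
proof (rule ccontr)
  assume off_line: "\<not> F \<subseteq> Inr ` (C \<times> {y})"
  obtain c v A B where c: "c \<in> C" and v: "v \<in> V" and AB: "A \<subseteq> nbrC E c" "B \<subseteq> nbrV E v"
    and F_eq: "F = Inl ` (A \<times> {v}) \<union> Inr ` ({c} \<times> B)"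
    using F by (rule small_setsE)
  define S where "S = symdiff (A \<times> nbrV E v) (nbrC E c \<times> B)"
  have score: "score V C E \<sigma> F = of_int (gain \<sigma> S) / (card A + card B)"
    unfolding F_eq S_def using score_small_set[OF fin E \<sigma>(1) AB] .
  have "0 < gain \<sigma> S"
    using pos unfolding score by (simp add: zero_less_divide_iff)
  moreover have "\<not> (B \<subseteq> {y} \<and> A = {})"
    using off_line c unfolding F_eq by auto
  moreover have "\<sigma> \<subseteq> UNIV \<times> {y}"
    using \<sigma>(2) by auto
  ultimately have y: "y \<in> nbrV E v" and le: "gain \<sigma> S \<le> gain \<sigma> (nbrC E c \<times> {y})"
    and two: "2 \<le> card A + card B"
    using gain_on_column_le_line[OF finite_nbrV[OF fin(2) E] finite_nbrC[OF fin(1) E] AB deg[OF v]]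
    unfolding S_def by blast+
  have single: "{} \<subseteq> nbrC E c" "{y} \<subseteq> nbrV E v"
    using y by auto
  have "score V C E \<sigma> F < of_int (gain \<sigma> (nbrC E c \<times> {y}))"
    using pos le two unfolding score by (intro divide_lt_of_two_le) auto
  also have "\<dots> = score V C E \<sigma> (Inl ` ({} \<times> {v}) \<union> Inr ` ({c} \<times> {y}))"
    using score_small_set[OF fin E \<sigma>(1) single] by (simp add: symdiff_def)
  finally show False
    using score_lt_not_max[OF fin E small_setsI[OF c v single]] max by blast
qed

theorem lemma1:
  fixes V :: "'v set" and C :: "'c set" and E :: "('v \<times> 'c) set"
    and dV dC :: nat and \<sigma> :: "('v \<times> 'c) set"
  assumes "biregular_bip V C E dV dC"
    and "connected_bip V C E"
    and "dV \<ge> 2" and "dC \<ge> 2"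
    and "\<exists>Err. Err \<subseteq> qubits V C \<and> \<sigma> = syndrome V C E Err"
    and "\<sigma> \<noteq> {}"
  shows "(\<forall>v1 \<in> V. \<sigma> \<subseteq> {v1} \<times> C \<longrightarrow>
            (\<forall>F \<in> small_sets V C E.
               score V C E \<sigma> F = Max (score V C E \<sigma> ` small_sets V C E) \<and> score V C E \<sigma> F > 0
               \<longrightarrow> F \<subseteq> Inl ` ({v1} \<times> V)))
       \<and> (\<forall>c2 \<in> C. \<sigma> \<subseteq> V \<times> {c2} \<longrightarrow>
            (\<forall>F \<in> small_sets V C E.
               score V C E \<sigma> F = Max (score V C E \<sigma> ` small_sets V C E) \<and> score V C E \<sigma> F > 0
               \<longrightarrow> F \<subseteq> Inr ` (C \<times> {c2})))"
proof -
  have fin: "finite V" "finite C" and E: "E \<subseteq> V \<times> C"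
    and deg: "\<And>v. v \<in> V \<Longrightarrow> 2 \<le> card (nbrV E v)" "\<And>c. c \<in> C \<Longrightarrow> 2 \<le> card (nbrC E c)"
    using assms(1,3,4) unfolding biregular_bip_def by auto
  have "\<sigma> \<subseteq> V \<times> C"
    using assms(5) unfolding syndrome_def by auto
  then have "finite \<sigma>"
    using fin finite_subset by blast
  show ?thesis
  proof (intro conjI ballI impI; elim conjE)
    show "F \<subseteq> Inl ` ({v1} \<times> V)"
      if "\<sigma> \<subseteq> {v1} \<times> C" "F \<in> small_sets V C E"
        "score V C E \<sigma> F = Max (score V C E \<sigma> ` small_sets V C E)" "0 < score V C E \<sigma> F"
      for v1 F
      using maximal_flip_on_row[OF fin E deg(2) \<open>finite \<sigma>\<close> that] .
    show "F \<subseteq> Inr ` (C \<times> {c2})"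
      if "\<sigma> \<subseteq> V \<times> {c2}" "F \<in> small_sets V C E"
        "score V C E \<sigma> F = Max (score V C E \<sigma> ` small_sets V C E)" "0 < score V C E \<sigma> F"
      for c2 F
      using maximal_flip_on_column[OF fin E deg(1) \<open>finite \<sigma>\<close> that] .
  qed
qed

end
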